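(* Fix a TxnSP instance. Let $i$ and $j$ be subschedules formed by the same subset $S\subseteq J$, and suppose $i$ dominates $j$, i.e. $ms_i\le mt_j$. Let $S'\supseteq S$. Then for every subschedule $l$ formed by $S'$ and derived from $j$, there exists a subschedule $k$ formed by $S'$ and derived from $i$ with $ms_k\le ms_l$.
   Context: TxnSP instance: jobs $J=\{1,\dots,n\}$, identical machines $1,\dots,m$, lengths $L_\alpha>0$, symmetric binary conflict matrix $C$ with zero diagonal ($C_{\alpha\beta}=1$ iff $\alpha\neq\beta$ conflict). Insertion process: Start from some state, where each machine $\mu$ has a processing time $P_\mu$ (initially $0$ when empty). An instruction $(\alpha,\mu)$ appends a not-yet-placed job $\alpha$ at the end of machine $\mu$. It assigns $\alpha$ the start time $st(\alpha)$, defined as the least $t\ge P_\mu$ such that $[t,t+L_\alpha)$ is disjoint from $[st(\beta),ct(\beta))$ for every already placed job $\beta$ with $C_{\alpha\beta}=1$. It then sets the completion time $ct(\alpha)=st(\alpha)+L_\alpha$ and updates $P_\mu:=ct(\alpha)$. A subschedule formed by $S\subseteq J$ is the result (machine assignment, per-machine order, start and completion times) of applying, from the empty state, a list of instructions whose jobs are exactly the elements of $S$. Its size is $|S|$. A schedule is a subschedule formed by $J$. Its makespan $ms$ is $\max_\mu P_\mu$, and its minimum time $mt$ is $\min_\mu P_\mu$. A subschedule $j$ is derived from $i$ (and $i$ is a root of $j$) if there is an instruction list producing $i$ and a further list $\mathcal D$ (the derivation plan) such that applying $\mathcal D$ after it produces $j$. The residual subschedule $j-i$ is the result of applying $\mathcal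 D$ from the empty state. *)

theory Defs
  imports Main "HOL-Library.Library"
begin

text \<open>TxnSP instance: jobs 1..n, machines 1..m, lengths L, conflict relation C.\<close>

definition txnsp_instance :: "nat \<Rightarrow> nat \<Rightarrow> (nat \<Rightarrow> real) \<Rightarrow> (nat \<Rightarrow> nat \<Rightarrow> bool) \<Rightarrow> bool" where
  "txnsp_instance n m L C \<longleftrightarrow>
     1 \<le> m \<and> (\<forall>\<alpha>\<in>{1..n}. 0 < L \<alpha>) \<and> (\<forall>\<alpha> \<beta>. C \<alpha> \<beta> = C \<beta> \<alpha>) \<and> (\<forall>\<alpha>. \<not> C \<alpha> \<alpha>)"

text \<open>A state: per-machine job order, start times, per-machine processing time.\<close>
record sched =
  seq :: "nat \<Rightarrow> nat list"
  st  :: "nat \<Rightarrow> real"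
  P   :: "nat \<Rightarrow> real"

definition placed :: "sched \<Rightarrow> nat set" where
  "placed s = (\<Union>\<mu>. set (seq s \<mu>))"

definition ct :: "(nat \<Rightarrow> real) \<Rightarrow> sched \<Rightarrow> nat \<Rightarrow> real" where
  "ct L s \<beta> = st s \<beta> + L \<beta>"

definition empty_sched :: sched where
  "empty_sched = \<lparr>seq = (\<lambda>_. []), st = (\<lambda>_. 0), P = (\<lambda>_. 0)\<rparr>"

definition start_time :: "(nat \<Rightarrow> real) \<Rightarrow> (nat \<Rightarrow> nat \<Rightarrow> bool) \<Rightarrow> sched \<Rightarrow> nat \<Rightarrow> nat \<Rightarrow> real" where
  "start_time L C s \<alpha> \<mu> =
     (LEAST t. P s \<mu> \<le> t \<and>
        (\<forall>\<beta>\<in>placed s. C \<alpha> \<beta> \<longrightarrow> {t..<t + L \<alpha>} \<inter> {st s \<beta>..<ct L s \<beta>} = {}))"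

definition apply_instr :: "(nat \<Rightarrow> real) \<Rightarrow> (nat \<Rightarrow> nat \<Rightarrow> bool) \<Rightarrow> nat \<times> nat \<Rightarrow> sched \<Rightarrow> sched" where
  "apply_instr L C ins s =
     (let \<alpha> = fst ins; \<mu> = snd ins; t = start_time L C s \<alpha> \<mu> in
      s\<lparr>seq := (seq s)(\<mu> := seq s \<mu> @ [\<alpha>]), st := (st s)(\<alpha> := t), P := (P s)(\<mu> := t + L \<alpha>)\<rparr>)"

definition run :: "(nat \<Rightarrow> real) \<Rightarrow> (nat \<Rightarrow> nat \<Rightarrow> bool) \<Rightarrow> sched \<Rightarrow> (nat \<times> nat) list \<Rightarrow> sched" where
  "run L C s D = fold (apply_instr L C) D s"

fun valid_plan :: "nat \<Rightarrow> nat \<Rightarrow> (nat \<Rightarrow> real) \<Rightarrow> (nat \<Rightarrow> nat \<Rightarrow> bool) \<Rightarrow> sched \<Rightarrow> (nat \<times> nat) list \<Rightarrow> bool" where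
  "valid_plan n m L C s [] = True"
| "valid_plan n m L C s (ins # D) =
     (fst ins \<in> {1..n} \<and> snd ins \<in> {1..m} \<and> fst ins \<notin> placed s \<and>
      valid_plan n m L C (apply_instr L C ins s) D)"

definition subsched_formed_by :: "nat \<Rightarrow> nat \<Rightarrow> (nat \<Rightarrow> real) \<Rightarrow> (nat \<Rightarrow> nat \<Rightarrow> bool) \<Rightarrow> nat set \<Rightarrow> sched \<Rightarrow> bool" where
  "subsched_formed_by n m L C S x \<longleftrightarrow>
     (\<exists>D. valid_plan n m L C empty_sched D \<and> set (map fst D) = S \<and> run L C empty_sched D = x)"

definition derived_from :: "nat \<Rightarrow> nat \<Rightarrow> (nat \<Rightarrow> real) \<Rightarrow> (nat \<Rightarrow> nat \<Rightarrow> bool) \<Rightarrow> sched \<Rightarrow> sched \<Rightarrow> bool" where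
  "derived_from n m L C j i \<longleftrightarrow>
     (\<exists>D0 D. valid_plan n m L C empty_sched D0 \<and> run L C empty_sched D0 = i \<and>
             valid_plan n m L C i D \<and> run L C i D = j)"

definition ms :: "nat \<Rightarrow> sched \<Rightarrow> real" where
  "ms m s = Max (P s ` {1..m})"

definition mt :: "nat \<Rightarrow> sched \<Rightarrow> real" where
  "mt m s = Min (P s ` {1..m})"

end

theory Submission
  imports Defs
begin

text \<open>Let \<open>T = ms i \<le> mt j\<close>. Every job that the derivation plan \<open>D\<close> of \<open>l\<close> adds to \<open>j\<close>
  starts in \<open>l\<close> no earlier than \<open>T\<close>, while \<open>i\<close> has finished all its work by \<open>T\<close>. Replay \<open>D\<close>
  on \<open>i\<close>, on the same machines but in order of the start times in \<open>l\<close>. By induction, the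
  start time of each job in \<open>l\<close> is still feasible when the job is inserted, so the least
  feasible start chosen by the insertion is no later. Hence every machine of the replay
  \<open>k\<close> finishes either by \<open>T \<le> P\<^sub>l\<close> or with a job that ends no later than in \<open>l\<close>, and
  \<open>ms k \<le> ms l\<close>.\<close>

lemma disjoint_atLeastLessThan:
  fixes t s a b :: real
  assumes "0 < a" "0 < b" "{t..<t + a} \<inter> {s..<s + b} = {}"
  shows "t + a \<le> s \<or> s + b \<le> t"
proof (rule ccontr)
  assume "\<not> ?thesis"
  then have "max t s \<in> {t..<t + a} \<inter> {s..<s + b}" using assms(1,2) by auto
  with assms(3) show False by blast
qed

lemma placed_empty_sched [simp]: "placed empty_sched = {}"
  unfolding placed_def empty_sched_def by simp

lemma placed_apply_instr [simp]: "placed (apply_instr L C x s) = insert (fst x) (placed s)"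
  unfolding placed_def apply_instr_def Let_def by (auto split: if_splits)

lemma st_apply_instr [simp]:
  "st (apply_instr L C x s) = (st s)(fst x := start_time L C s (fst x) (snd x))"
  unfolding apply_instr_def Let_def by simp

lemma P_apply_instr [simp]:
  "P (apply_instr L C x s) = (P s)(snd x := start_time L C s (fst x) (snd x) + L (fst x))"
  unfolding apply_instr_def Let_def by simp

lemma run_Nil [simp]: "run L C s [] = s"
  unfolding run_def by simp

lemma run_snoc [simp]: "run L C s (xs @ [x]) = apply_instr L C x (run L C s xs)"
  unfolding run_def by simp

lemma run_append: "run L C s (xs @ ys) = run L C (run L C s xs) ys"
  unfolding run_def by simp

lemma placed_run: "placed (run L C s xs) = placed s \<union> fst ` set xs"
  by (induction xs rule: rev_induct) auto

lemma st_run_notin: "\<gamma> \<notin> fst ` set xs \<Longrightarrow> st (run L C s xs) \<gamma> = st s \<gamma>"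
  by (induction xs rule: rev_induct) auto

lemma st_run_job:
  assumes "distinct (map fst (ys @ x # zs))"
  shows "st (run L C s (ys @ x # zs)) (fst x) = start_time L C (run L C s ys) (fst x) (snd x)"
proof -
  have "fst x \<notin> fst ` set zs" using assms by auto
  moreover have "run L C s (ys @ x # zs) = run L C (run L C s (ys @ [x])) zs"
    using run_append[of L C s "ys @ [x]" zs] by simp
  ultimately show ?thesis using st_run_notin by simp
qed

lemma valid_plan_append:
  "valid_plan n m L C s (xs @ ys) \<longleftrightarrow>
     valid_plan n m L C s xs \<and> valid_plan n m L C (run L C s xs) ys"
  by (induction xs arbitrary: s) (auto simp: run_def)

lemma valid_plan_iff:
  "valid_plan n m L C s xs \<longleftrightarrow>
     (\<forall>x\<in>set xs. fst x \<in> {1..n} \<and> snd x \<in> {1..m}) \<and> distinct (map fst xs) \<and>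
     fst ` set xs \<inter> placed s = {}"
  by (induction xs arbitrary: s) auto

lemma valid_plan_cong:
  assumes "placed s = placed s'" "mset xs = mset ys"
  shows "valid_plan n m L C s xs \<longleftrightarrow> valid_plan n m L C s' ys"
proof -
  have "set xs = set ys" using assms(2) by (rule mset_eq_setD)
  moreover have "distinct (map fst xs) \<longleftrightarrow> distinct (map fst ys)"
    using assms(2) by (intro mset_eq_imp_distinct_iff) simp
  ultimately show ?thesis using assms(1) by (simp add: valid_plan_iff)
qed

lemma P_run_cases:
  assumes "distinct (map fst xs)"
  shows "P (run L C s xs) \<mu> = P s \<mu> \<or>
    (\<exists>x\<in>set xs. snd x = \<mu> \<and> P (run L C s xs) \<mu> = ct L (run L C s xs) (fst x))"
  using assms
proof (induction xs rule: rev_induct)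
  case (snoc x xs)
  let ?r = "run L C s xs"
  show ?case
  proof (cases "snd x = \<mu>")
    case True
    then show ?thesis by (auto simp: ct_def)
  next
    case False
    have "ct L (run L C s (xs @ [x])) (fst y) = ct L ?r (fst y)" if "y \<in> set xs" for y
    proof -
      have "fst y \<noteq> fst x" using snoc.prems that by (auto intro: rev_image_eqI)
      then show ?thesis by (simp add: ct_def)
    qed
    with False snoc show ?thesis by auto
  qed
qed simp

definition feasible_start ::
  "(nat \<Rightarrow> real) \<Rightarrow> (nat \<Rightarrow> nat \<Rightarrow> bool) \<Rightarrow> sched \<Rightarrow> nat \<Rightarrow> nat \<Rightarrow> real \<Rightarrow> bool" where
  "feasible_start L C s \<alpha> \<mu> t \<longleftrightarrow> P s \<mu> \<le> t \<and>
     (\<forall>\<beta>\<in>placed s. C \<alpha> \<beta> \<longrightarrow> {t..<t + L \<alpha>} \<inter> {st s \<beta>..<ct L s \<beta>} = {})"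

lemma feasible_startI:
  assumes "P s \<mu> \<le> t" "\<And>\<beta>. \<beta> \<in> placed s \<Longrightarrow> C \<alpha> \<beta> \<Longrightarrow> ct L s \<beta> \<le> t"
  shows "feasible_start L C s \<alpha> \<mu> t"
  using assms unfolding feasible_start_def by fastforce

lemma feasible_start_disjoint:
  assumes "feasible_start L C s \<alpha> \<mu> t" "\<beta> \<in> placed s" "C \<alpha> \<beta>" "0 < L \<alpha>" "0 < L \<beta>"
  shows "t + L \<alpha> \<le> st s \<beta> \<or> ct L s \<beta> \<le> t"
  using assms disjoint_atLeastLessThan[of "L \<alpha>" "L \<beta>" t "st s \<beta>"]
  unfolding feasible_start_def ct_def by blast

lemma feasible_start_snap:
  assumes "feasible_start L C s \<alpha> \<mu> y" "finite (placed s)"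
  defines "c \<equiv> Max {c \<in> insert (P s \<mu>) (ct L s ` placed s). c \<le> y}"
  shows "feasible_start L C s \<alpha> \<mu> c \<and> c \<le> y"
proof -
  let ?K = "{c \<in> insert (P s \<mu>) (ct L s ` placed s). c \<le> y}"
  have fin: "finite ?K" using assms(2) by simp
  have P_K: "P s \<mu> \<in> ?K" using assms(1) by (simp add: feasible_start_def)
  have "c \<in> ?K" unfolding c_def using fin P_K by (intro Max_in) auto
  then have c_le: "c \<le> y" by simp
  have P_le: "P s \<mu> \<le> c" unfolding c_def using fin P_K by (rule Max_ge)
  have "{c..<c + L \<alpha>} \<inter> {st s \<beta>..<ct L s \<beta>} = {}" if \<beta>: "\<beta> \<in> placed s" "C \<alpha> \<beta>" for \<beta>
  proof (cases "ct L s \<beta> \<le> y")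
    case True
    with \<beta> have "ct L s \<beta> \<le> c" unfolding c_def using fin by (intro Max_ge) auto
    then show ?thesis by auto
  next
    case False
    have "{y..<y + L \<alpha>} \<inter> {st s \<beta>..<ct L s \<beta>} = {}"
      using assms(1) \<beta> by (simp add: feasible_start_def)
    with False c_le show ?thesis by (auto simp: disjoint_iff)
  qed
  with P_le c_le show ?thesis by (simp add: feasible_start_def)
qed

lemma
  assumes "finite (placed s)"
  shows start_time_feasible: "feasible_start L C s \<alpha> \<mu> (start_time L C s \<alpha> \<mu>)"
    and start_time_le: "feasible_start L C s \<alpha> \<mu> t \<Longrightarrow> start_time L C s \<alpha> \<mu> \<le> t"
proof -
  let ?F = "feasible_start L C s \<alpha> \<mu>"
  define K where "K = insert (P s \<mu>) (ct L s ` placed s)"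
  have fin: "finite {c \<in> K. ?F c}" using assms K_def by simp
  have "?F (Max K)"
    using assms by (intro feasible_startI) (auto simp: K_def)
  moreover have "Max K \<in> K" using assms unfolding K_def by (intro Max_in) auto
  ultimately have ne: "{c \<in> K. ?F c} \<noteq> {}" by blast
  define x where "x = Min {c \<in> K. ?F c}"
  have x: "x \<in> {c \<in> K. ?F c}" unfolding x_def using fin ne by (rule Min_in)
  have x_le: "x \<le> y" if "?F y" for y
  proof -
    let ?c = "Max {c \<in> K. c \<le> y}"
    have snap: "?F ?c \<and> ?c \<le> y"
      using feasible_start_snap[OF that assms] by (simp add: K_def)
    have "P s \<mu> \<in> {c \<in> K. c \<le> y}"
      using that by (simp add: K_def feasible_start_def)
    then have "?c \<in> {c \<in> K. c \<le> y}"
      using assms by (intro Max_in) (auto simp: K_def)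
    with snap have "x \<le> ?c" unfolding x_def using fin by (intro Min_le) auto
    with snap show ?thesis by linarith
  qed
  have "start_time L C s \<alpha> \<mu> = x"
    unfolding start_time_def feasible_start_def[symmetric]
    using x x_le by (intro Least_equality) auto
  with x x_le show "?F (start_time L C s \<alpha> \<mu>)" "?F t \<Longrightarrow> start_time L C s \<alpha> \<mu> \<le> t"
    by auto
qed

lemma P_le_P_apply_instr:
  assumes "finite (placed s)" "0 \<le> L (fst x)"
  shows "P s \<mu> \<le> P (apply_instr L C x s) \<mu>"
  using start_time_feasible[OF assms(1), of L C "fst x" "snd x"] assms(2)
  by (auto simp: feasible_start_def)

lemma P_le_ms: "\<mu> \<in> {1..m} \<Longrightarrow> P s \<mu> \<le> ms m s"
  unfolding ms_def by simp

lemma mt_le_P: "\<mu> \<in> {1..m} \<Longrightarrow> mt m s \<le> P s \<mu>"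
  unfolding mt_def by simp

lemma ms_mono:
  assumes "\<And>\<mu>. \<mu> \<in> {1..m} \<Longrightarrow> P s \<mu> \<le> P s' \<mu>"
  shows "ms m s \<le> ms m s'"
proof (cases "m = 0")
  case False
  have "P s \<mu> \<le> ms m s'" if "\<mu> \<in> {1..m}" for \<mu>
    using assms[OF that] P_le_ms[OF that, of s'] by linarith
  with False show ?thesis
    unfolding ms_def by (intro Max.boundedI) auto
qed (simp add: ms_def) \<comment> \<open>for \<open>m = 0\<close> both sides are the junk value \<open>Max {}\<close>\<close>

lemma subsched_formed_by_iff:
  "subsched_formed_by n m L C S s \<longleftrightarrow>
     (\<exists>D. valid_plan n m L C empty_sched D \<and> run L C empty_sched D = s) \<and> placed s = S"
  unfolding subsched_formed_by_def by (force simp: placed_run)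

lemma subsched_formed_by_finite: "subsched_formed_by n m L C S s \<Longrightarrow> finite S"
  unfolding subsched_formed_by_def by auto

lemma subsched_formed_by_run:
  assumes "subsched_formed_by n m L C S s" "valid_plan n m L C s E"
  shows "subsched_formed_by n m L C (S \<union> fst ` set E) (run L C s E)"
proof -
  obtain D where "valid_plan n m L C empty_sched D" "run L C empty_sched D = s" "placed s = S"
    using assms(1) by (auto simp: subsched_formed_by_iff)
  with assms(2) show ?thesis unfolding subsched_formed_by_iff
    by (metis run_append valid_plan_append placed_run)
qed

lemma derived_from_run:
  assumes "subsched_formed_by n m L C S s" "valid_plan n m L C s E"
  shows "derived_from n m L C (run L C s E) s"
  using assms unfolding subsched_formed_by_def derived_from_def by blast

definition no_overlap :: "(nat \<Rightarrow> real) \<Rightarrow> (nat \<Rightarrow> real) \<Rightarrow> nat \<Rightarrow> nat \<Rightarrow> bool" where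
  "no_overlap L \<sigma> a b \<longleftrightarrow> \<sigma> a + L a \<le> \<sigma> b \<or> \<sigma> b + L b \<le> \<sigma> a"

lemma no_overlap_commute: "no_overlap L \<sigma> a b \<longleftrightarrow> no_overlap L \<sigma> b a"
  unfolding no_overlap_def by auto

context
  fixes n m :: nat and L :: "nat \<Rightarrow> real" and C :: "nat \<Rightarrow> nat \<Rightarrow> bool"
  assumes inst: "txnsp_instance n m L C"
begin

lemma length_pos: "\<alpha> \<in> {1..n} \<Longrightarrow> 0 < L \<alpha>"
  using inst by (simp add: txnsp_instance_def)

lemma conflict_sym: "C \<alpha> \<beta> \<longleftrightarrow> C \<beta> \<alpha>"
  using inst by (simp add: txnsp_instance_def)

lemma P_run_mono:
  assumes "finite (placed s)" "valid_plan n m L C s xs"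
  shows "P s \<mu> \<le> P (run L C s xs) \<mu>"
  using assms(2)
proof (induction xs rule: rev_induct)
  case (snoc x xs)
  have valid: "valid_plan n m L C s xs" "fst x \<in> {1..n}"
    using snoc.prems by (simp_all add: valid_plan_append)
  have "P (run L C s xs) \<mu> \<le> P (run L C s (xs @ [x])) \<mu>"
    unfolding run_snoc using assms(1) length_pos[OF valid(2)]
    by (intro P_le_P_apply_instr) (simp_all add: placed_run)
  with snoc.IH[OF valid(1)] show ?case by linarith
qed simp

lemma P_le_st_run:
  assumes "finite (placed s)" "valid_plan n m L C s xs" "x \<in> set xs"
  shows "P s (snd x) \<le> st (run L C s xs) (fst x)"
proof -
  obtain ys zs where xs: "xs = ys @ x # zs" using assms(3) by (meson split_list)
  let ?r = "run L C s ys"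
  have "valid_plan n m L C s ys" using assms(2) xs by (simp add: valid_plan_append)
  then have "P s (snd x) \<le> P ?r (snd x)" by (rule P_run_mono[OF assms(1)])
  also have "\<dots> \<le> start_time L C ?r (fst x) (snd x)"
    using start_time_feasible[of ?r] assms(1) by (auto simp: placed_run feasible_start_def)
  also have "\<dots> = st (run L C s xs) (fst x)"
    using st_run_job[of ys x zs] assms(2) xs by (simp add: valid_plan_iff)
  finally show ?thesis .
qed

lemma ct_run_le_P:
  assumes "finite (placed s)" "valid_plan n m L C s xs" "x \<in> set xs"
  shows "ct L (run L C s xs) (fst x) \<le> P (run L C s xs) (snd x)"
proof -
  obtain ys zs where xs: "xs = ys @ x # zs" using assms(3) by (meson split_list)
  let ?r = "run L C s (ys @ [x])"
  have "ct L (run L C s xs) (fst x) = P ?r (snd x)"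
    using st_run_job[of ys x zs] assms(2) xs by (simp add: valid_plan_iff ct_def)
  also have "\<dots> \<le> P (run L C ?r zs) (snd x)"
    using assms(1,2) xs by (intro P_run_mono) (simp_all add: placed_run valid_plan_append)
  also have "run L C ?r zs = run L C s xs"
    using xs run_append[of L C s "ys @ [x]" zs] by simp
  finally show ?thesis .
qed

lemma no_overlap_run:
  assumes "finite (placed s)" "valid_plan n m L C s xs"
    and "a \<in> set xs" "b \<in> set xs" "fst a \<noteq> fst b" "snd a = snd b \<or> C (fst a) (fst b)"
  shows "no_overlap L (st (run L C s xs)) (fst a) (fst b)"
  using assms(2-)
proof (induction xs arbitrary: a b rule: rev_induct)
  case (snoc x xs)
  let ?r = "run L C s xs"
  let ?t = "start_time L C ?r (fst x) (snd x)"
  have valid: "valid_plan n m L C s xs" and x: "fst x \<in> {1..n}" "fst x \<notin> placed ?r"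
    using snoc.prems(1) by (simp_all add: valid_plan_append)
  have feasible: "feasible_start L C ?r (fst x) (snd x) ?t"
    using assms(1) by (intro start_time_feasible) (simp add: placed_run)
  have new: "no_overlap L (st (run L C s (xs @ [x]))) (fst x) (fst y)"
    if y: "y \<in> set xs" "snd y = snd x \<or> C (fst x) (fst y)" for y
  proof -
    have y_placed: "fst y \<in> placed ?r" using y(1) by (simp add: placed_run)
    have "?t + L (fst x) \<le> st ?r (fst y) \<or> ct L ?r (fst y) \<le> ?t"
      using y(2)
    proof
      assume "snd y = snd x"
      then have "ct L ?r (fst y) \<le> P ?r (snd x)"
        using ct_run_le_P[OF assms(1) valid y(1)] by simp
      also have "\<dots> \<le> ?t"
        using feasible by (simp add: feasible_start_def)
      finally show ?thesis ..
    next
      assume "C (fst x) (fst y)"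
      moreover have "0 < L (fst y)"
        using valid y(1) by (auto simp: valid_plan_iff intro: length_pos)
      ultimately show ?thesis
        using feasible_start_disjoint[OF feasible y_placed _ length_pos[OF x(1)]] by blast
    qed
    moreover have "fst y \<noteq> fst x" using y_placed x(2) by auto
    ultimately show ?thesis by (auto simp: no_overlap_def ct_def)
  qed
  consider "a = x" "b \<in> set xs" | "b = x" "a \<in> set xs" | "a \<in> set xs" "b \<in> set xs"
    using snoc.prems(2-4) by auto
  then show ?case
  proof cases
    case 1
    with snoc.prems(5) have "snd b = snd x \<or> C (fst x) (fst b)" by auto
    with 1 show ?thesis using new by blast
  next
    case 2
    with snoc.prems(5) have "snd a = snd x \<or> C (fst x) (fst a)" using conflict_sym by auto
    with 2 show ?thesis using new no_overlap_commute by blast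
  next
    case 3
    then have "fst a \<in> placed ?r" "fst b \<in> placed ?r" by (simp_all add: placed_run)
    then have "fst a \<noteq> fst x" "fst b \<noteq> fst x" using x(2) by auto
    with snoc.IH[OF valid 3 snoc.prems(4,5)] show ?thesis by (simp add: no_overlap_def)
  qed
qed simp

lemma subsched_ct_le_ms:
  assumes "subsched_formed_by n m L C S s" "\<gamma> \<in> S"
  shows "ct L s \<gamma> \<le> ms m s"
proof -
  obtain D where D: "valid_plan n m L C empty_sched D" "run L C empty_sched D = s"
    and S: "S = placed s" using assms(1) by (auto simp: subsched_formed_by_iff)
  obtain x where x: "x \<in> set D" "\<gamma> = fst x"
    using assms(2) S D(2) by (auto simp: placed_run)
  have "ct L s \<gamma> \<le> P s (snd x)"
    using ct_run_le_P[of empty_sched, OF _ D(1) x(1)] D(2) x(2) by simp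
  also have "\<dots> \<le> ms m s"
    using D(1) x(1) by (intro P_le_ms) (auto simp: valid_plan_iff)
  finally show ?thesis .
qed

text \<open>At each insertion \<open>\<sigma>\<close> itself is a feasible start: every earlier job on the same machine
  or in conflict ends by then in \<open>\<sigma>\<close>, hence also in the run.\<close>
lemma run_st_le_timetable:
  fixes \<sigma> :: "nat \<Rightarrow> real"
  assumes fin: "finite (placed s)"
    and P_T: "\<forall>\<mu>\<in>{1..m}. P s \<mu> \<le> T" and ct_T: "\<forall>\<gamma>\<in>placed s. ct L s \<gamma> \<le> T"
    and "valid_plan n m L C s xs" "List.sorted (map (\<lambda>x. \<sigma> (fst x)) xs)" "\<forall>x\<in>set xs. T \<le> \<sigma> (fst x)"
    and "\<forall>a\<in>set xs. \<forall>b\<in>set xs. fst a \<noteq> fst b \<and> (snd a = snd b \<or> C (fst a) (fst b)) \<longrightarrow>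
           no_overlap L \<sigma> (fst a) (fst b)"
  shows "\<forall>x\<in>set xs. st (run L C s xs) (fst x) \<le> \<sigma> (fst x)"
  using assms(4-)
proof (induction xs rule: rev_induct)
  case (snoc x xs)
  let ?r = "run L C s xs"
  obtain \<alpha> \<mu> where x: "x = (\<alpha>, \<mu>)" by fastforce
  have valid: "valid_plan n m L C s xs" and \<alpha>: "\<alpha> \<in> {1..n}" "\<alpha> \<notin> placed ?r"
    and \<mu>: "\<mu> \<in> {1..m}"
    using snoc.prems(1) x by (simp_all add: valid_plan_append)
  have sorted: "List.sorted (map (\<lambda>x. \<sigma> (fst x)) xs)" and earlier: "\<forall>y\<in>set xs. \<sigma> (fst y) \<le> \<sigma> \<alpha>"
    using snoc.prems(2) x by (simp_all add: sorted_append)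
  have T_\<alpha>: "T \<le> \<sigma> \<alpha>" using snoc.prems(3) x by simp
  have IH: "\<forall>y\<in>set xs. st ?r (fst y) \<le> \<sigma> (fst y)"
    using snoc.IH[OF valid sorted] snoc.prems(3,4) by simp
  have ends_before: "ct L ?r (fst y) \<le> \<sigma> \<alpha>" if y: "y \<in> set xs" "snd y = \<mu> \<or> C \<alpha> (fst y)" for y
  proof -
    have "fst y \<noteq> \<alpha>" using y(1) \<alpha>(2) by (auto simp: placed_run)
    then have "no_overlap L \<sigma> (fst y) \<alpha>"
      using snoc.prems(4) y x conflict_sym by auto
    moreover have "\<sigma> (fst y) \<le> \<sigma> \<alpha>" using earlier y(1) by blast
    moreover have "0 < L \<alpha>" using \<alpha>(1) by (rule length_pos)
    ultimately have "\<sigma> (fst y) + L (fst y) \<le> \<sigma> \<alpha>" by (auto simp: no_overlap_def)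
    moreover have "st ?r (fst y) \<le> \<sigma> (fst y)" using IH y(1) by blast
    ultimately show ?thesis unfolding ct_def by linarith
  qed
  have "feasible_start L C ?r \<alpha> \<mu> (\<sigma> \<alpha>)"
  proof (rule feasible_startI)
    have "P ?r \<mu> = P s \<mu> \<or> (\<exists>y\<in>set xs. snd y = \<mu> \<and> P ?r \<mu> = ct L ?r (fst y))"
      using valid by (intro P_run_cases) (simp add: valid_plan_iff)
    then show "P ?r \<mu> \<le> \<sigma> \<alpha>"
    proof
      assume "P ?r \<mu> = P s \<mu>"
      then show ?thesis using bspec[OF P_T \<mu>] T_\<alpha> by linarith
    next
      assume "\<exists>y\<in>set xs. snd y = \<mu> \<and> P ?r \<mu> = ct L ?r (fst y)"
      then obtain y where "y \<in> set xs" "snd y = \<mu>" "P ?r \<mu> = ct L ?r (fst y)" by blast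
      then show ?thesis using ends_before[of y] by simp
    qed
  next
    fix \<beta> assume \<beta>: "\<beta> \<in> placed ?r" "C \<alpha> \<beta>"
    show "ct L ?r \<beta> \<le> \<sigma> \<alpha>"
    proof (cases "\<beta> \<in> placed s")
      case True
      then have "\<beta> \<notin> fst ` set xs" using valid by (auto simp: valid_plan_iff)
      then have "ct L ?r \<beta> = ct L s \<beta>" by (simp add: ct_def st_run_notin)
      then show ?thesis using bspec[OF ct_T True] T_\<alpha> by linarith
    next
      case False
      then obtain y where "y \<in> set xs" "\<beta> = fst y" using \<beta>(1) by (auto simp: placed_run)
      then show ?thesis using ends_before \<beta>(2) by blast
    qed
  qed
  then have "st (run L C s (xs @ [x])) \<alpha> \<le> \<sigma> \<alpha>"
    using start_time_le fin x by (simp add: placed_run)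
  moreover have "st (run L C s (xs @ [x])) (fst y) = st ?r (fst y)" if "y \<in> set xs" for y
    using that \<alpha>(2) x by (auto simp: placed_run)
  ultimately show ?case using IH x by auto
qed simp

lemma sorted_replay_P_le:
  assumes fin_i: "finite (placed i)" and fin_j: "finite (placed j)"
    and i_T: "\<forall>\<mu>\<in>{1..m}. P i \<mu> \<le> T" "\<forall>\<gamma>\<in>placed i. ct L i \<gamma> \<le> T"
    and j_T: "\<forall>\<mu>\<in>{1..m}. T \<le> P j \<mu>"
    and D: "valid_plan n m L C j D"
    and E: "valid_plan n m L C i E" "mset E = mset D"
    and sorted: "List.sorted (map (\<lambda>x. st (run L C j D) (fst x)) E)"
    and \<mu>: "\<mu> \<in> {1..m}"
  shows "P (run L C i E) \<mu> \<le> P (run L C j D) \<mu>"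
proof -
  let ?l = "run L C j D" and ?k = "run L C i E"
  have set_E: "set E = set D" using E(2) by (rule mset_eq_setD)
  have T_le_st: "T \<le> st ?l (fst x)" if "x \<in> set D" for x
  proof -
    have "snd x \<in> {1..m}" using D that by (auto simp: valid_plan_iff)
    then have "T \<le> P j (snd x)" using j_T by blast
    also have "\<dots> \<le> st ?l (fst x)" using fin_j D that by (rule P_le_st_run)
    finally show ?thesis .
  qed
  have st_le: "\<forall>x\<in>set E. st ?k (fst x) \<le> st ?l (fst x)"
    using fin_i i_T E(1) sorted
  proof (rule run_st_le_timetable)
    show "\<forall>x\<in>set E. T \<le> st ?l (fst x)" using T_le_st set_E by blast
    show "\<forall>a\<in>set E. \<forall>b\<in>set E. fst a \<noteq> fst b \<and> (snd a = snd b \<or> C (fst a) (fst b)) \<longrightarrow>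
        no_overlap L (st ?l) (fst a) (fst b)"
      using no_overlap_run[OF fin_j D] set_E by blast
  qed
  have "P ?k \<mu> = P i \<mu> \<or> (\<exists>x\<in>set E. snd x = \<mu> \<and> P ?k \<mu> = ct L ?k (fst x))"
    using E(1) by (intro P_run_cases) (simp add: valid_plan_iff)
  then show ?thesis
  proof
    assume "P ?k \<mu> = P i \<mu>"
    also have "\<dots> \<le> P j \<mu>" using i_T j_T \<mu> by fastforce
    also have "\<dots> \<le> P ?l \<mu>" using fin_j D by (rule P_run_mono)
    finally show ?thesis .
  next
    assume "\<exists>x\<in>set E. snd x = \<mu> \<and> P ?k \<mu> = ct L ?k (fst x)"
    then obtain x where x: "x \<in> set D" "snd x = \<mu>" "P ?k \<mu> = ct L ?k (fst x)"
      using set_E by blast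
    have "ct L ?k (fst x) \<le> ct L ?l (fst x)" using st_le set_E x(1) by (simp add: ct_def)
    also have "\<dots> \<le> P ?l \<mu>" using ct_run_le_P[OF fin_j D x(1)] x(2) by simp
    finally show ?thesis using x(3) by simp
  qed
qed

end

theorem theorem4:
  fixes n m :: nat and L :: "nat \<Rightarrow> real" and C :: "nat \<Rightarrow> nat \<Rightarrow> bool"
    and S S' :: "nat set" and i j l :: sched
  assumes "txnsp_instance n m L C"
    and "subsched_formed_by n m L C S i"
    and "subsched_formed_by n m L C S j"
    and "ms m i \<le> mt m j"
    and "S \<subseteq> S'"
    and "subsched_formed_by n m L C S' l"
    and "derived_from n m L C l j"
  shows "\<exists>k. subsched_formed_by n m L C S' k \<and> derived_from n m L C k i \<and> ms m k \<le> ms m l"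
proof -
  obtain D where D: "valid_plan n m L C j D" "run L C j D = l"
    using assms(7) unfolding derived_from_def by blast
  have i: "placed i = S" and j: "placed j = S"
    using assms(2,3) by (simp_all add: subsched_formed_by_iff)
  have fin: "finite S" using assms(2) by (rule subsched_formed_by_finite)
  have S': "S' = S \<union> fst ` set D"
    using subsched_formed_by_run[OF assms(3) D(1)] assms(6) D(2) by (simp add: subsched_formed_by_iff)
  define E where "E = sort_key (\<lambda>x. st l (fst x)) D"
  have E: "valid_plan n m L C i E" "mset E = mset D"
    using D(1) i j valid_plan_cong[of i j E D] by (simp_all add: E_def)
  have P_i: "\<forall>\<mu>\<in>{1..m}. P i \<mu> \<le> ms m i" using P_le_ms by blast
  have ct_i: "\<forall>\<gamma>\<in>placed i. ct L i \<gamma> \<le> ms m i" using subsched_ct_le_ms[OF assms(1,2)] i by blast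
  have P_j: "\<forall>\<mu>\<in>{1..m}. ms m i \<le> P j \<mu>" using assms(4) mt_le_P by (blast intro: order_trans)
  have "P (run L C i E) \<mu> \<le> P l \<mu>" if "\<mu> \<in> {1..m}" for \<mu>
    using sorted_replay_P_le[OF assms(1) _ _ P_i ct_i P_j D(1) E _ that] fin i j D(2)
    by (simp add: E_def)
  moreover have "subsched_formed_by n m L C S' (run L C i E)"
    using subsched_formed_by_run[OF assms(2) E(1)] mset_eq_setD[OF E(2)] S' by simp
  moreover have "derived_from n m L C (run L C i E) i"
    using assms(2) E(1) by (rule derived_from_run)
  ultimately show ?thesis by (blast intro: ms_mono)
qed

end
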